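(* Every SSSCG in which the leader's cost functions are weakly monotonic and the followers' cost functions are strictly monotonic has the following property: if it admits a PSE $(\sigma_\ell,\nu)$ with $\sigma_\ell$ mixed, then it also admits a PSE $(\hat\sigma_\ell,\hat\nu)$ with $\hat\sigma_\ell$ pure; in particular, it admits a PSE in which the leader's strategy is pure.
   Context: A symmetric Stackelberg singleton congestion game (SSSCG) consists of a leader $\ell$, a finite set $F$ of followers, a finite set $R$ of resources which every player may select (each player selects exactly one), and cost functions $c_{i,\ell},c_{i,f}:\mathbb N\to\mathbb Q$ ($i\in R$) for the leader and the followers with $c_{i,\ell}(0)=c_{i,f}(0)=0$. The leader commits to a probability distribution $\sigma_\ell$ on $R$ (pure if it puts probability $1$ on one resource). A followers' configuration is $\nu\in\mathbb N^R$ with $\sum_i\nu_i=|F|$. The followers' expected cost of resource $i$ with $x$ followers is $c^{\sigma_\ell}_{i,f}(x)=\sigma_\ell(i)c_{i,f}(x+1)+(1-\sigma_\ell(i))c_{i,f}(x)$; the leader's cost is $c_\ell^{(\sigma_\ell,\nu)}=\sum_{i\in R}\sigma_\ell(i)c_{i,\ell}(\nu_i+1)$. $\nu$ is a Nash equilibrium for $\sigma_\ell$ ($\nu\in E^{\sigma_\ell}$) if for all $i$ with $\nu_i>0$ and all $j\ne i$, $c^{\sigma_\ell}_{i,f}(\nu_i)\le c^{\sigma_\ell}_{j,f}(\nu_j+1)$. A pessimistic Stackelberg equilibrium (PSE) is a pair $(\sigma_\ell,\nu)$ such that $\sigma_\ell$ attains the minimum over all leader strategies of $\max_{\nu'\in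 E^{\sigma_\ell}}c_\ell^{(\sigma_\ell,\nu')}$ and $\nu\in E^{\sigma_\ell}$ attains that maximum. Weakly monotonic leader costs: $c_{i,\ell}(x)\le c_{i,\ell}(x+1)$ for all $i,x$; strictly monotonic follower costs: $c_{i,f}(x)<c_{i,f}(x+1)$ for all $i,x$. *)

theory Defs
  imports Complex_Main
begin

text \<open>A symmetric Stackelberg singleton congestion game (SSSCG) is given by a finite
 set of resources R, a finite set of followers F, and cost functions
 cl i, cf i :: nat \<Rightarrow> rat for every resource i (leader / followers) with value 0 at 0.
 Leader mixed strategies are probability distributions on R, given as functions
 'r \<Rightarrow> real vanishing outside R.\<close>

definition ssscg :: "'r set \<Rightarrow> 'f set \<Rightarrow> ('r \<Rightarrow> nat \<Rightarrow> rat) \<Rightarrow> ('r \<Rightarrow> nat \<Rightarrow> rat) \<Rightarrow> bool" where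
  "ssscg R F cl cf \<longleftrightarrow> finite R \<and> R \<noteq> {} \<and> finite F \<and>
     (\<forall>i\<in>R. cl i 0 = 0 \<and> cf i 0 = 0)"

definition leader_strategy :: "'r set \<Rightarrow> ('r \<Rightarrow> real) \<Rightarrow> bool" where
  "leader_strategy R \<sigma> \<longleftrightarrow> (\<forall>i. 0 \<le> \<sigma> i) \<and> (\<forall>i. i \<notin> R \<longrightarrow> \<sigma> i = 0) \<and> sum \<sigma> R = 1"

definition pure_strategy :: "'r set \<Rightarrow> ('r \<Rightarrow> real) \<Rightarrow> bool" where
  "pure_strategy R \<sigma> \<longleftrightarrow> leader_strategy R \<sigma> \<and> (\<exists>i\<in>R. \<sigma> i = 1)"

definition followers_config :: "'r set \<Rightarrow> 'f set \<Rightarrow> ('r \<Rightarrow> nat) \<Rightarrow> bool" where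
  "followers_config R F \<nu> \<longleftrightarrow> (\<forall>i. i \<notin> R \<longrightarrow> \<nu> i = 0) \<and> sum \<nu> R = card F"

text \<open>followers' expected cost of resource i used by x followers\<close>
definition fcost :: "('r \<Rightarrow> nat \<Rightarrow> rat) \<Rightarrow> ('r \<Rightarrow> real) \<Rightarrow> 'r \<Rightarrow> nat \<Rightarrow> real" where
  "fcost cf \<sigma> i x = \<sigma> i * of_rat (cf i (x + 1)) + (1 - \<sigma> i) * of_rat (cf i x)"

definition leader_cost :: "'r set \<Rightarrow> ('r \<Rightarrow> nat \<Rightarrow> rat) \<Rightarrow> ('r \<Rightarrow> real) \<Rightarrow> ('r \<Rightarrow> nat) \<Rightarrow> real" where
  "leader_cost R cl \<sigma> \<nu> = (\<Sum>i\<in>R. \<sigma> i * of_rat (cl i (\<nu> i + 1)))"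

definition follower_NE :: "'r set \<Rightarrow> 'f set \<Rightarrow> ('r \<Rightarrow> nat \<Rightarrow> rat) \<Rightarrow> ('r \<Rightarrow> real) \<Rightarrow> ('r \<Rightarrow> nat) \<Rightarrow> bool" where
  "follower_NE R F cf \<sigma> \<nu> \<longleftrightarrow> followers_config R F \<nu> \<and>
     (\<forall>i\<in>R. \<forall>j\<in>R. 0 < \<nu> i \<and> j \<noteq> i \<longrightarrow> fcost cf \<sigma> i (\<nu> i) \<le> fcost cf \<sigma> j (\<nu> j + 1))"

text \<open>Pessimistic Stackelberg equilibrium: \<nu> is a worst NE for \<sigma>, and the worst-case
 cost of \<sigma> is minimal, i.e. every other strategy has worst-case cost at least as large.\<close>
definition PSE :: "'r set \<Rightarrow> 'f set \<Rightarrow> ('r \<Rightarrow> nat \<Rightarrow> rat) \<Rightarrow> ('r \<Rightarrow> nat \<Rightarrow> rat) \<Rightarrow> ('r \<Rightarrow> real) \<Rightarrow> ('r \<Rightarrow> nat) \<Rightarrow> bool" where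
  "PSE R F cl cf \<sigma> \<nu> \<longleftrightarrow> leader_strategy R \<sigma> \<and> follower_NE R F cf \<sigma> \<nu> \<and>
     (\<forall>\<nu>'. follower_NE R F cf \<sigma> \<nu>' \<longrightarrow> leader_cost R cl \<sigma> \<nu>' \<le> leader_cost R cl \<sigma> \<nu>) \<and>
     (\<forall>\<sigma>'. leader_strategy R \<sigma>' \<longrightarrow>
        (\<exists>\<nu>'. follower_NE R F cf \<sigma>' \<nu>' \<and> leader_cost R cl \<sigma> \<nu> \<le> leader_cost R cl \<sigma>' \<nu>'))"

end

theory Submission
  imports Defs "HOL-Library.FuncSet" "HOL-Library.Indicator_Function"
begin

text \<open>Followers' equilibria exist for every leader strategy by Rosenthal's potential argument.
  Strict monotonicity of the followers' costs shows that if the leader does not play resource i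
  with certainty, every followers' equilibrium puts at least as many followers on i as any
  equilibrium against the pure strategy on i. With weakly monotonic leader costs, the cost
  of a mixed strategy, the sum of \<sigma> k \<cdot> cl k (\<nu> k + 1) over k, is therefore a convex
  combination of numbers each at least the worst-case cost of some pure strategy. So the pure strategy of least worst-case
  cost, together with a worst equilibrium against it, is a pessimistic Stackelberg equilibrium.\<close>

lemma finite_followers_configs:
  fixes R :: "'r set"
  assumes "finite R"
  shows "finite {\<nu>. followers_config R F \<nu>}"
proof -
  let ?extend = "\<lambda>g::'r \<Rightarrow> nat. \<lambda>i. if i \<in> R then g i else 0"
  have "{\<nu>. followers_config R F \<nu>} \<subseteq> ?extend ` (PiE R (\<lambda>_. {..card F}))"
  proof
    fix \<nu> assume "\<nu> \<in> {\<nu>. followers_config R F \<nu>}"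
    then have outside: "\<forall>i. i \<notin> R \<longrightarrow> \<nu> i = 0" and total: "sum \<nu> R = card F"
      by (auto simp: followers_config_def)
    have "\<nu> i \<le> card F" if "i \<in> R" for i
      using member_le_sum[OF that _ assms, of \<nu>] total by simp
    then have "restrict \<nu> R \<in> PiE R (\<lambda>_. {..card F})" by auto
    moreover have "\<nu> = ?extend (restrict \<nu> R)" using outside by auto
    ultimately show "\<nu> \<in> ?extend ` (PiE R (\<lambda>_. {..card F}))" by blast
  qed
  moreover have "finite (PiE R (\<lambda>_. {..card F}))" using assms by (intro finite_PiE) auto
  ultimately show ?thesis by (meson finite_imageI finite_subset)
qed

definition rosenthal_potential ::
    "'r set \<Rightarrow> ('r \<Rightarrow> nat \<Rightarrow> rat) \<Rightarrow> ('r \<Rightarrow> real) \<Rightarrow> ('r \<Rightarrow> nat) \<Rightarrow> real" where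
  "rosenthal_potential R cf \<sigma> \<nu> = (\<Sum>k\<in>R. \<Sum>x<\<nu> k. fcost cf \<sigma> k (Suc x))"

lemma rosenthal_potential_move:
  assumes "finite R" "i \<in> R" "j \<in> R" "i \<noteq> j" "\<nu> i = Suc m"
  shows "rosenthal_potential R cf \<sigma> (\<nu>(i := m, j := Suc (\<nu> j))) =
           rosenthal_potential R cf \<sigma> \<nu> - fcost cf \<sigma> i (\<nu> i) + fcost cf \<sigma> j (\<nu> j + 1)"
proof -
  let ?\<nu>' = "\<nu>(i := m, j := Suc (\<nu> j))"
  have "(\<Sum>x<?\<nu>' k. fcost cf \<sigma> k (Suc x)) =
          (\<Sum>x<\<nu> k. fcost cf \<sigma> k (Suc x))
          - (if k = i then fcost cf \<sigma> i (\<nu> i) else 0)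
          + (if k = j then fcost cf \<sigma> j (\<nu> j + 1) else 0)" for k
    using assms(4,5) by auto
  then show ?thesis
    using assms(1-3) by (simp add: rosenthal_potential_def sum.distrib sum_subtractf)
qed

lemma move_follower_config:
  assumes "followers_config R F \<nu>" "finite R" "i \<in> R" "j \<in> R" "i \<noteq> j" "\<nu> i = Suc m"
  shows "followers_config R F (\<nu>(i := m, j := Suc (\<nu> j)))"
proof -
  let ?\<nu>' = "\<nu>(i := m, j := Suc (\<nu> j))"
  have "?\<nu>' k + (if k = i then 1 else 0) = \<nu> k + (if k = j then 1 else 0)" for k
    using assms(5,6) by auto
  then have "(\<Sum>k\<in>R. ?\<nu>' k + (if k = i then 1 else 0)) = (\<Sum>k\<in>R. \<nu> k + (if k = j then 1 else 0))"
    by simp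
  then have "sum ?\<nu>' R + 1 = sum \<nu> R + 1"
    using assms(2-4) by (simp add: sum.distrib)
  then show ?thesis using assms(1,3,4) by (auto simp: followers_config_def)
qed

text \<open>A configuration minimising Rosenthal's potential is an equilibrium, since a profitable
  deviation of one follower would decrease the potential.\<close>

lemma follower_NE_exists:
  assumes "finite R" "R \<noteq> {}"
  shows "\<exists>\<nu>. follower_NE R F cf \<sigma> \<nu>"
proof -
  let ?configs = "{\<nu>. followers_config R F \<nu>}"
  obtain r where "r \<in> R" using assms(2) by blast
  then have "followers_config R F (\<lambda>i. if i = r then card F else 0)"
    using assms(1) by (simp add: followers_config_def)
  then have "?configs \<noteq> {}" by blast
  then obtain \<nu> where config: "followers_config R F \<nu>"
    and minimal: "\<And>\<nu>'. followers_config R F \<nu>' \<Longrightarrow>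
                    rosenthal_potential R cf \<sigma> \<nu> \<le> rosenthal_potential R cf \<sigma> \<nu>'"
    using arg_min_if_finite[OF finite_followers_configs[OF assms(1)], of F]
    by (metis (no_types, lifting) mem_Collect_eq not_le)
  have "fcost cf \<sigma> i (\<nu> i) \<le> fcost cf \<sigma> j (\<nu> j + 1)"
    if "i \<in> R" "j \<in> R" "0 < \<nu> i" "j \<noteq> i" for i j
  proof -
    obtain m where m: "\<nu> i = Suc m" using \<open>0 < \<nu> i\<close> gr0_conv_Suc by blast
    show ?thesis
      using minimal[OF move_follower_config[where \<nu> = \<nu>, OF config assms(1) that(1,2) _ m]]
        rosenthal_potential_move[where \<nu> = \<nu>, OF assms(1) that(1,2) _ m] that(4) by simp
  qed
  with config show ?thesis by (auto simp: follower_NE_def)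
qed

lemma mono_of_rat_of_step_le:
  fixes c :: "nat \<Rightarrow> rat"
  assumes "\<forall>x. c x \<le> c (x + 1)"
  shows "mono (\<lambda>x. real_of_rat (c x))"
  using assms by (simp add: mono_iff_le_Suc of_rat_less_eq)

lemma leader_strategy_le_1:
  assumes "finite R" "leader_strategy R \<sigma>"
  shows "\<sigma> k \<le> 1"
  using assms member_le_sum[of k R \<sigma>] by (cases "k \<in> R") (auto simp: leader_strategy_def)

text \<open>If \<mu> i > \<nu> i, some j carries fewer followers in \<mu> than in \<nu>; the equilibrium
  conditions of \<mu> (for moving from i to j) and of \<nu> (from j to i), together with
  \<sigma> i < 1 and strict monotonicity, then give a strict cyclic inequality.\<close>

lemma pure_NE_load_le:
  assumes "finite R" and mono: "\<forall>i\<in>R. \<forall>x. cf i x < cf i (x + 1)"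
    and "leader_strategy R \<sigma>" "\<sigma> i < 1" "i \<in> R"
    and NE: "follower_NE R F cf \<sigma> \<nu>" and NE_pure: "follower_NE R F cf (indicator {i}) \<mu>"
  shows "\<mu> i \<le> \<nu> i"
proof (rule ccontr)
  assume "\<not> \<mu> i \<le> \<nu> i"
  then have more: "\<nu> i < \<mu> i" by simp
  have "\<exists>j\<in>R - {i}. \<mu> j < \<nu> j"
  proof (rule ccontr)
    assume "\<not> ?thesis"
    then have "sum \<nu> (R - {i}) \<le> sum \<mu> (R - {i})" by (intro sum_mono) (simp add: not_less)
    then have "sum \<nu> R < sum \<mu> R"
      using more assms(1,5) by (simp add: sum.remove)
    with NE NE_pure show False by (simp add: follower_NE_def followers_config_def)
  qed
  then obtain j where j: "j \<in> R" "j \<noteq> i" "\<mu> j < \<nu> j" by auto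
  let ?c = "\<lambda>k x. real_of_rat (cf k x)"
  have mono_c: "mono (?c k)" if "k \<in> R" for k
    using mono that by (intro mono_of_rat_of_step_le) (simp add: less_imp_le)
  have "?c i (\<mu> i + 1) \<le> ?c j (\<mu> j + 1)"
    using NE_pure j more \<open>i \<in> R\<close> by (force simp: follower_NE_def fcost_def)
  also have "\<dots> \<le> ?c j (\<nu> j)" using monoD[OF mono_c[OF \<open>j \<in> R\<close>], of "\<mu> j + 1"] j(3) by simp
  also have "\<dots> \<le> fcost cf \<sigma> j (\<nu> j)"
  proof -
    have "?c j (\<nu> j) \<le> ?c j (\<nu> j + 1)" using monoD[OF mono_c[OF \<open>j \<in> R\<close>]] by simp
    moreover have "0 \<le> \<sigma> j" using \<open>leader_strategy R \<sigma>\<close> by (simp add: leader_strategy_def)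
    ultimately have "0 \<le> \<sigma> j * (?c j (\<nu> j + 1) - ?c j (\<nu> j))" by simp
    then show ?thesis by (simp add: fcost_def algebra_simps)
  qed
  also have "\<dots> \<le> fcost cf \<sigma> i (\<nu> i + 1)"
    using NE j \<open>i \<in> R\<close> by (force simp: follower_NE_def)
  also have "\<dots> < ?c i (\<nu> i + 2)"
  proof -
    have "0 < (1 - \<sigma> i) * (?c i (\<nu> i + 2) - ?c i (\<nu> i + 1))"
      using \<open>\<sigma> i < 1\<close> mono \<open>i \<in> R\<close> by (simp add: of_rat_less)
    then show ?thesis by (simp add: fcost_def algebra_simps)
  qed
  also have "\<dots> \<le> ?c i (\<mu> i + 1)" using monoD[OF mono_c[OF \<open>i \<in> R\<close>], of "\<nu> i + 2"] more by simp
  finally show False by simp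
qed

definition worst_cost ::
    "'r set \<Rightarrow> 'f set \<Rightarrow> ('r \<Rightarrow> nat \<Rightarrow> rat) \<Rightarrow> ('r \<Rightarrow> nat \<Rightarrow> rat) \<Rightarrow> ('r \<Rightarrow> real) \<Rightarrow> real" where
  "worst_cost R F cl cf \<sigma> = Max (leader_cost R cl \<sigma> ` {\<nu>. follower_NE R F cf \<sigma> \<nu>})"

lemma
  assumes "finite R" "R \<noteq> {}"
  shows worst_cost_ge: "follower_NE R F cf \<sigma> \<nu> \<Longrightarrow> leader_cost R cl \<sigma> \<nu> \<le> worst_cost R F cl cf \<sigma>"
    and worst_cost_attained:
      "\<exists>\<nu>. follower_NE R F cf \<sigma> \<nu> \<and> leader_cost R cl \<sigma> \<nu> = worst_cost R F cl cf \<sigma>"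
proof -
  let ?costs = "leader_cost R cl \<sigma> ` {\<nu>. follower_NE R F cf \<sigma> \<nu>}"
  have "finite {\<nu>. follower_NE R F cf \<sigma> \<nu>}"
    by (rule finite_subset[OF _ finite_followers_configs[OF assms(1)]])
      (auto simp: follower_NE_def)
  then have finite: "finite ?costs" by simp
  show "follower_NE R F cf \<sigma> \<nu> \<Longrightarrow> leader_cost R cl \<sigma> \<nu> \<le> worst_cost R F cl cf \<sigma>"
    using finite unfolding worst_cost_def by simp
  have "?costs \<noteq> {}" using follower_NE_exists[OF assms] by auto
  with finite have "worst_cost R F cl cf \<sigma> \<in> ?costs" unfolding worst_cost_def by (rule Max_in)
  then show "\<exists>\<nu>. follower_NE R F cf \<sigma> \<nu> \<and> leader_cost R cl \<sigma> \<nu> = worst_cost R F cl cf \<sigma>"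
    by force
qed

lemma PSE_if_worst_cost_minimal:
  assumes "finite R" "R \<noteq> {}" "leader_strategy R \<sigma>"
    and minimal: "\<And>\<sigma>'. leader_strategy R \<sigma>' \<Longrightarrow> worst_cost R F cl cf \<sigma> \<le> worst_cost R F cl cf \<sigma>'"
  shows "\<exists>\<nu>. PSE R F cl cf \<sigma> \<nu>"
proof -
  obtain \<nu> where \<nu>: "follower_NE R F cf \<sigma> \<nu>" "leader_cost R cl \<sigma> \<nu> = worst_cost R F cl cf \<sigma>"
    using worst_cost_attained[OF assms(1,2)] by blast
  have better: "\<exists>\<nu>'. follower_NE R F cf \<sigma>' \<nu>' \<and> leader_cost R cl \<sigma> \<nu> \<le> leader_cost R cl \<sigma>' \<nu>'"
    if "leader_strategy R \<sigma>'" for \<sigma>'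
    using worst_cost_attained[OF assms(1,2), where F = F and cf = cf and cl = cl and \<sigma> = \<sigma>']
      minimal[OF that] \<nu>(2) by force
  have "PSE R F cl cf \<sigma> \<nu>"
    unfolding PSE_def using \<nu> assms(3) better worst_cost_ge[OF assms(1,2)] by auto
  then show ?thesis by blast
qed

lemma leader_cost_indicator:
  assumes "finite R" "i \<in> R"
  shows "leader_cost R cl (indicator {i}) \<nu> = real_of_rat (cl i (\<nu> i + 1))"
  using assms by (simp add: leader_cost_def indicator_def if_distrib sum.delta cong: if_cong)

lemma pure_strategy_indicator:
  assumes "finite R" "i \<in> R"
  shows "pure_strategy R (indicator {i})"
  using assms by (auto simp: pure_strategy_def leader_strategy_def indicator_def sum.delta)

lemma leader_strategy_eq_indicator:
  assumes "finite R" "leader_strategy R \<sigma>" "k \<in> R" "\<sigma> k = 1"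
  shows "\<sigma> = indicator {k}"
proof
  fix x
  have "sum \<sigma> R = \<sigma> k + sum \<sigma> (R - {k})" using assms by (simp add: sum.remove)
  then have "\<forall>i\<in>R - {k}. \<sigma> i = 0"
    using assms sum_nonneg_eq_0_iff[of "R - {k}" \<sigma>] by (simp add: leader_strategy_def)
  then show "\<sigma> x = indicator {k} x"
    using assms by (cases "x \<in> R") (auto simp: leader_strategy_def indicator_def)
qed

lemma min_pure_worst_cost_le_mixed:
  assumes "finite R" "R \<noteq> {}"
    and cl_mono: "\<forall>i\<in>R. \<forall>x. cl i x \<le> cl i (x + 1)"
    and cf_mono: "\<forall>i\<in>R. \<forall>x. cf i x < cf i (x + 1)"
    and min: "\<And>k. k \<in> R \<Longrightarrow> w \<le> worst_cost R F cl cf (indicator {k})"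
    and "leader_strategy R \<sigma>" "\<not> pure_strategy R \<sigma>" and NE: "follower_NE R F cf \<sigma> \<nu>"
  shows "w \<le> leader_cost R cl \<sigma> \<nu>"
proof -
  have cost_bound: "w \<le> real_of_rat (cl k (\<nu> k + 1))" if k: "k \<in> R" for k
  proof -
    obtain \<mu> where \<mu>: "follower_NE R F cf (indicator {k}) \<mu>"
      "real_of_rat (cl k (\<mu> k + 1)) = worst_cost R F cl cf (indicator {k})"
      using worst_cost_attained[OF assms(1,2)] leader_cost_indicator[OF assms(1) k, of cl]
      by metis
    have "\<sigma> k \<noteq> 1" using assms(6,7) k by (auto simp: pure_strategy_def)
    then have "\<sigma> k < 1" using leader_strategy_le_1[OF assms(1,6), of k] by linarith
    then have "\<mu> k + 1 \<le> \<nu> k + 1"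
      using pure_NE_load_le[OF assms(1) cf_mono assms(6) _ k NE \<mu>(1)] by simp
    then have "real_of_rat (cl k (\<mu> k + 1)) \<le> real_of_rat (cl k (\<nu> k + 1))"
      using mono_of_rat_of_step_le cl_mono k by (metis monoD)
    with \<mu>(2) min[OF k] show ?thesis by linarith
  qed
  have "w = (\<Sum>k\<in>R. \<sigma> k * w)"
    using assms(6) by (simp add: leader_strategy_def flip: sum_distrib_right)
  also have "\<dots> \<le> leader_cost R cl \<sigma> \<nu>"
    unfolding leader_cost_def using assms(6) cost_bound
    by (intro sum_mono mult_left_mono) (auto simp: leader_strategy_def)
  finally show ?thesis .
qed

lemma pure_PSE_exists:
  assumes "ssscg R F cl cf"
    and "\<forall>i\<in>R. \<forall>x. cl i x \<le> cl i (x + 1)"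
    and "\<forall>i\<in>R. \<forall>x. cf i x < cf i (x + 1)"
  shows "\<exists>\<sigma> \<nu>. PSE R F cl cf \<sigma> \<nu> \<and> pure_strategy R \<sigma>"
proof -
  have R: "finite R" "R \<noteq> {}" using assms(1) by (auto simp: ssscg_def)
  let ?W = "\<lambda>k. worst_cost R F cl cf (indicator {k})"
  obtain i where i: "i \<in> R" "\<And>k. k \<in> R \<Longrightarrow> ?W i \<le> ?W k"
    using arg_min_if_finite[OF R, of ?W] by (metis not_le)
  have "?W i \<le> worst_cost R F cl cf \<sigma>" if \<sigma>: "leader_strategy R \<sigma>" for \<sigma>
  proof (cases "pure_strategy R \<sigma>")
    case True
    then obtain k where "k \<in> R" "\<sigma> = indicator {k}"
      using leader_strategy_eq_indicator[OF R(1) \<sigma>] by (auto simp: pure_strategy_def)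
    with i show ?thesis by simp
  next
    case False
    obtain \<nu> where "follower_NE R F cf \<sigma> \<nu>" using follower_NE_exists[OF R] by blast
    with min_pure_worst_cost_le_mixed[OF R assms(2,3) i(2) \<sigma> False] worst_cost_ge[OF R]
    show ?thesis by (meson order_trans)
  qed
  moreover have "pure_strategy R (indicator {i})" using pure_strategy_indicator[OF R(1) i(1)] .
  ultimately show ?thesis
    using PSE_if_worst_cost_minimal[OF R, where \<sigma> = "indicator {i}" and F = F and cl = cl and cf = cf]
    by (auto simp: pure_strategy_def)
qed

theorem theorem8:
  fixes R :: "'r set" and F :: "'f set" and cl cf :: "'r \<Rightarrow> nat \<Rightarrow> rat"
  assumes "ssscg R F cl cf"
    and "\<forall>i\<in>R. \<forall>x. cl i x \<le> cl i (x + 1)"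
    and "\<forall>i\<in>R. \<forall>x. cf i x < cf i (x + 1)"
  shows "((\<exists>\<sigma> \<nu>. PSE R F cl cf \<sigma> \<nu> \<and> \<not> pure_strategy R \<sigma>) \<longrightarrow>
            (\<exists>\<sigma> \<nu>. PSE R F cl cf \<sigma> \<nu> \<and> pure_strategy R \<sigma>))
         \<and> (\<exists>\<sigma> \<nu>. PSE R F cl cf \<sigma> \<nu> \<and> pure_strategy R \<sigma>)"
  using pure_PSE_exists[OF assms] by blast

end
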